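(* Assume CH. Then there exists a MAD family $\mathcal{A}\subseteq[\omega]^\omega$ such that (i) $\mathcal{A}$ is a $\lambda$-set, i.e. every countable subset of $\mathcal{A}$ is a relative $G_\delta$ subset of $\mathcal{A}$, and (ii) $\mathcal{A}$ is concentrated on the finite subsets of $\omega$, i.e. every open set $U\subseteq P(\omega)\cong 2^\omega$ containing $[\omega]^{<\omega}$ contains all but countably many elements of $\mathcal{A}$.
   Context: $[\omega]^\omega$ and $[\omega]^{<\omega}$ denote the sets of infinite and finite subsets of $\omega$; $P(\omega)$ is identified with $2^\omega$ via characteristic functions, with the product topology. A MAD family is an infinite set $\mathcal{A}\subseteq[\omega]^\omega$ such that any two distinct elements have finite intersection and every infinite subset of $\omega$ has infinite intersection with some element of $\mathcal{A}$. CH is the continuum hypothesis $2^{\aleph_0}=\aleph_1$. *)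

theory Defs
  imports "HOL-Analysis.Analysis"
begin

definition CH :: bool where
  "CH \<longleftrightarrow> (card_of (UNIV :: nat set set), cardSuc natLeq) \<in> ordIso"

text \<open>Identification of P(omega) with the Cantor space 2^omega via characteristic functions.\<close>
definition chi :: "nat set \<Rightarrow> (nat \<Rightarrow> bool)" where
  "chi A = (\<lambda>n. n \<in> A)"

definition cantor_top :: "(nat \<Rightarrow> bool) topology" where
  "cantor_top = product_topology (\<lambda>_::nat. discrete_topology (UNIV :: bool set)) UNIV"

definition MAD :: "nat set set \<Rightarrow> bool" where
  "MAD \<A> \<longleftrightarrow> infinite \<A> \<and> (\<forall>A\<in>\<A>. infinite A)
     \<and> (\<forall>A\<in>\<A>. \<forall>B\<in>\<A>. A \<noteq> B \<longrightarrow> finite (A \<inter> B))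
     \<and> (\<forall>X. infinite X \<longrightarrow> (\<exists>A\<in>\<A>. infinite (X \<inter> A)))"

definition G_delta_in :: "'a topology \<Rightarrow> 'a set \<Rightarrow> bool" where
  "G_delta_in T G \<longleftrightarrow> (\<exists>U :: nat \<Rightarrow> 'a set. (\<forall>n. openin T (U n)) \<and> G = (\<Inter>n. U n))"

definition lambda_set :: "nat set set \<Rightarrow> bool" where
  "lambda_set \<A> \<longleftrightarrow> (\<forall>\<C>. \<C> \<subseteq> \<A> \<and> countable \<C> \<longrightarrow>
     (\<exists>G. G_delta_in cantor_top G \<and> chi ` \<C> = G \<inter> chi ` \<A>))"

definition concentrated_on_fin :: "nat set set \<Rightarrow> bool" where
  "concentrated_on_fin \<A> \<longleftrightarrow> (\<forall>U. openin cantor_top U \<and> chi ` {A. finite A} \<subseteq> U \<longrightarrow>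
     countable {A \<in> \<A>. chi A \<notin> U})"

end

theory Submission
  imports Defs "HOL-Library.Countable_Set_Type"
begin

(* CH yields a well-ordering W of P(omega) whose proper initial segments are all countable.
  Along W we choose sets a_Z by recursion, each almost disjoint from the countably many sets
  chosen earlier and from the columns of omega x omega; each a_Z is the range of a fast-growing
  sequence that diagonalises against countably many requirements at once.
  If Z is almost disjoint from all earlier sets, a_Z is chosen inside Z: the family is maximal.
  Z also codes a function f_Z, and every a_Z' with Z' at or above Z has a point p with no
  further points below f_Z p.  Every open set containing the finite sets contains all sets with
  such a gap for a suitable f, hence all a_Z' from the stage coding f on: the family is
  concentrated on the finite sets.
  Finally, for Z' at or above Z, a_Z' meets the k-th set chosen before Z in fewer than k + n
  points, with n independent of k.  The sets having at least k + n points in the k-th of these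
  earlier sets, for some k, form open sets U_n whose intersection contains the earlier sets but
  no later a_Z'; removing countably many further points, every countable subfamily becomes the
  trace of a G_delta set. *)

lemma uncountable_UNIV_nat_set: "uncountable (UNIV :: nat set set)"
  by (metis Cantors_theorem Pow_UNIV empty_not_UNIV range_from_nat_into)

context
  includes cardinal_syntax
begin

lemma countable_underS_if_ordIso_cardSuc_natLeq:
  assumes "Card_order r" and "(r, cardSuc natLeq) \<in> ordIso"
  shows "countable (underS r a)"
proof (cases "a \<in> Field r")
  case True
  have "|underS r a| <o cardSuc natLeq"
    using card_of_underS[OF assms(1) True] assms(2) by (rule ordLess_ordIso_trans)
  then show ?thesis
    unfolding countable_card_le_natLeq
    using cardSuc_ordLeq_ordLess[OF natLeq_Card_order card_of_Card_order] by blast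
qed (simp add: underS_empty)

end

lemma wfrec_SOME_invariant:
  assumes "wf R"
    and cong: "\<And>f g x. (\<And>y. (y, x) \<in> R \<Longrightarrow> f y = g y) \<Longrightarrow> P f x = P g x"
    and step: "\<And>f x. (\<And>y. (y, x) \<in> R \<Longrightarrow> P f y (f y)) \<Longrightarrow> \<exists>a. P f x a"
  shows "P (wfrec R (\<lambda>f x. SOME a. P f x a)) x (wfrec R (\<lambda>f x. SOME a. P f x a) x)"
  using assms(1)
proof (induction x rule: wf_induct_rule)
  case (less x)
  let ?F = "wfrec R (\<lambda>f x. SOME a. P f x a)"
  have "P (cut ?F R x) x = P ?F x"
    by (rule cong) (simp add: cut_apply)
  then have "?F x = (SOME a. P ?F x a)"
    by (simp add: wfrec[OF \<open>wf R\<close>])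
  then show ?case
    using someI_ex[OF step[OF less.IH]] by simp
qed

lemma infinite_Diff_Union_almost_disjoint:
  assumes "infinite B" and "finite F" and "\<And>e. e \<in> F \<Longrightarrow> finite (B \<inter> e)"
  shows "infinite (B - \<Union>F)"
proof -
  have "finite (\<Union>e\<in>F. B \<inter> e)"
    using assms(2,3) by blast
  then have "infinite (B - (\<Union>e\<in>F. B \<inter> e))"
    using assms(1) Diff_infinite_finite by blast
  moreover have "B - (\<Union>e\<in>F. B \<inter> e) = B - \<Union>F"
    by blast
  ultimately show ?thesis
    by simp
qed

definition column :: "nat \<Rightarrow> nat set" where
  "column k = {n. fst (prod_decode n) = k}"

lemma infinite_column: "infinite (column k)"
proof -
  have "range (\<lambda>m. prod_encode (k, m)) \<subseteq> column k"
    unfolding column_def by auto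
  moreover have "inj (\<lambda>m. prod_encode (k, m))"
    by (auto simp: inj_def prod_encode_eq)
  ultimately show ?thesis
    using range_inj_infinite infinite_super by blast
qed

lemma disjoint_column: "j \<noteq> k \<Longrightarrow> column j \<inter> column k = {}"
  unfolding column_def by auto

lemma infinite_range_column: "infinite (range column)"
proof -
  have "inj column"
    by (rule injI) (metis disjoint_column infinite_column Int_absorb finite.emptyI)
  then show ?thesis
    by (rule range_inj_infinite)
qed

definition has_gap :: "(nat \<Rightarrow> nat) \<Rightarrow> nat set \<Rightarrow> bool" where
  "has_gap f A \<longleftrightarrow> (\<exists>p\<in>A. \<forall>m. p < m \<and> m < f p \<longrightarrow> m \<notin> A)"

definition bounded_traces :: "(nat \<Rightarrow> nat set) \<Rightarrow> nat \<Rightarrow> nat set \<Rightarrow> bool" where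
  "bounded_traces e n A \<longleftrightarrow> (\<forall>k. finite (A \<inter> e k) \<and> card (A \<inter> e k) < k + n)"

lemma exists_bounded_traces_has_gap:
  fixes D :: "nat \<Rightarrow> nat \<Rightarrow> nat set" and g :: "nat \<Rightarrow> nat \<Rightarrow> nat"
  assumes "\<And>i. infinite (Y - (\<Union>j\<le>i. \<Union>k\<le>i. D j k))"
  obtains A where "infinite A" "A \<subseteq> Y"
    "\<And>j. bounded_traces (D j) (Suc j) A" "\<And>j. has_gap (g j) A"
proof -
  let ?S = "\<lambda>i. Y - (\<Union>j\<le>i. \<Union>k\<le>i. D j k)"
  have "\<exists>m'. m' \<in> ?S i \<and> b < m'" for i b
    using assms infinite_nat_iff_unbounded by blast
  then obtain n where n: "\<And>i. n i \<in> ?S i" "\<And>i. n i < n (Suc i)" "\<And>i. g i (n i) \<le> n (Suc i)"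
    using dependent_nat_choice[of "\<lambda>i m. m \<in> ?S i" "\<lambda>i m m'. m < m' \<and> g i m \<le> m'"]
    by (metis max.strict_boundedE less_imp_le)
  have mono: "strict_mono n"
    using n(2) by (simp add: strict_mono_Suc_iff)
  show ?thesis
  proof
    show "infinite (range n)"
      using mono strict_mono_imp_inj_on range_inj_infinite by blast
    show "range n \<subseteq> Y"
      using n(1) by blast
    show "bounded_traces (D j) (Suc j) (range n)" for j
      unfolding bounded_traces_def
    proof
      fix k
      have trace: "range n \<inter> D j k \<subseteq> n ` {..<max j k}"
        using n(1) by (force simp: not_less)
      then have "card (range n \<inter> D j k) \<le> card (n ` {..<max j k})"
        by (simp add: card_mono)
      also have "\<dots> \<le> max j k"
        using card_image_le[of "{..<max j k}" n] by simp
      finally show "finite (range n \<inter> D j k) \<and> card (range n \<inter> D j k) < k + Suc j"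
        using finite_subset[OF trace] by auto
    qed
    show "has_gap (g j) (range n)" for j
      unfolding has_gap_def
    proof (intro bexI allI impI)
      fix m assume m: "n j < m \<and> m < g j (n j)"
      show "m \<notin> range n"
      proof
        assume "m \<in> range n"
        then obtain i where "m = n i" by blast
        then show False
          using m n(3)[of j] strict_mono_less_eq[OF mono, of i j]
            strict_mono_less_eq[OF mono, of "Suc j" i] by (cases "i \<le> j") auto
      qed
    qed simp
  qed
qed

definition fun_of_set :: "nat set \<Rightarrow> nat \<Rightarrow> nat" where
  "fun_of_set S p = (LEAST m. prod_encode (p, m) \<notin> S)"

lemma fun_of_set_surj: "\<exists>S. fun_of_set S = f"
proof
  define S where "S = {n. snd (prod_decode n) < f (fst (prod_decode n))}"
  show "fun_of_set S = f"
  proof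
    fix p
    have "fun_of_set S p = (LEAST m. \<not> m < f p)"
      by (simp add: fun_of_set_def S_def)
    also have "\<dots> = f p"
      by (rule Least_equality) auto
    finally show "fun_of_set S p = f p" .
  qed
qed

lemma inj_chi: "inj chi"
  by (rule injI) (simp add: chi_def fun_eq_iff set_eq_iff)

lemma topspace_cantor_top: "topspace cantor_top = UNIV"
  by (simp add: cantor_top_def)

lemma openin_cantor_top_coordinate: "openin cantor_top {y. y j = b}"
proof -
  have "continuous_map cantor_top (discrete_topology UNIV) (\<lambda>y. y j)"
    unfolding cantor_top_def by (rule continuous_map_product_projection) simp
  then show ?thesis
    using openin_continuous_map_preimage[of cantor_top _ _ "{b}"]
    by (simp add: topspace_cantor_top)
qed

lemma openin_cantor_top_finite_true:
  assumes "finite F" shows "openin cantor_top {y. \<forall>j\<in>F. y j}"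
proof -
  have "openin cantor_top ((\<Inter>j\<in>F. {y. y j = True}) \<inter> topspace cantor_top)"
    by (rule openin_INT[OF assms]) (rule openin_cantor_top_coordinate)
  moreover have "{y. \<forall>j\<in>F. y j} = (\<Inter>j\<in>F. {y. y j = True}) \<inter> topspace cantor_top"
    by (auto simp: topspace_cantor_top)
  ultimately show ?thesis
    by simp
qed

lemma openin_cantor_top_basic_nbhd:
  assumes "openin cantor_top U" and "z \<in> U"
  obtains N where "\<And>y. (\<forall>j<N. y j = z j) \<Longrightarrow> y \<in> U"
proof -
  obtain V where V: "finite {i. V i \<noteq> UNIV}" "z \<in> Pi\<^sub>E UNIV V" "Pi\<^sub>E UNIV V \<subseteq> U"
    using assms unfolding cantor_top_def openin_product_topology_alt by force
  define N where "N = Suc (Max (insert 0 {i. V i \<noteq> UNIV}))"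
  have "y \<in> U" if agree: "\<forall>j<N. y j = z j" for y
  proof -
    have "y i \<in> V i" for i
    proof (cases "V i = UNIV")
      case False
      then have "i < N"
        using V(1) by (simp add: N_def le_imp_less_Suc)
      then show ?thesis
        using agree V(2) by (auto simp: PiE_def)
    qed simp
    then show ?thesis
      using V(3) by (auto simp: PiE_def)
  qed
  then show ?thesis
    using that by blast
qed

lemma G_delta_inI:
  fixes U :: "nat \<Rightarrow> 'a set"
  shows "(\<And>n. openin T (U n)) \<Longrightarrow> G_delta_in T (\<Inter>n. U n)"
  unfolding G_delta_in_def by blast

lemma G_delta_in_Int:
  assumes "G_delta_in T G" and "G_delta_in T H"
  shows "G_delta_in T (G \<inter> H)"
proof -
  obtain U V :: "nat \<Rightarrow> 'a set"
    where U: "\<And>n. openin T (U n)" "G = (\<Inter>n. U n)"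
      and V: "\<And>n. openin T (V n)" "H = (\<Inter>n. V n)"
    using assms unfolding G_delta_in_def by blast
  have "G \<inter> H = (\<Inter>n. U n \<inter> V n)"
    unfolding U(2) V(2) by blast
  also have "G_delta_in T \<dots>"
    using U(1) V(1) by (intro G_delta_inI openin_Int)
  finally show ?thesis .
qed

lemma G_delta_in_cantor_top_Compl_countable:
  assumes "countable D" shows "G_delta_in cantor_top (- D)"
proof (cases "D = {}")
  case True
  have "G_delta_in cantor_top (\<Inter>n::nat. UNIV)"
    using openin_topspace[of cantor_top] by (intro G_delta_inI) (simp add: topspace_cantor_top)
  then show ?thesis
    using True by simp
next
  case False
  have "t1_space cantor_top"
    unfolding cantor_top_def
    by (simp add: t1_space_product_topology Hausdorff_imp_t1_space)
  then have "openin cantor_top (- {from_nat_into D n})" for n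
    using t1_space_openin_delete_alt openin_topspace[of cantor_top]
    by (metis Compl_eq_Diff_UNIV topspace_cantor_top)
  then have "G_delta_in cantor_top (\<Inter>n. - {from_nat_into D n})"
    by (rule G_delta_inI)
  moreover have "- D = (\<Inter>n. - {from_nat_into D n})"
    using range_from_nat_into[OF False assms] by auto
  ultimately show ?thesis
    by simp
qed

lemma G_delta_in_cantor_top_bounded_traces:
  assumes "\<And>k. infinite (e k)"
  obtains G where "G_delta_in cantor_top G" "\<And>k. chi (e k) \<in> G"
    "\<And>n B. bounded_traces e n B \<Longrightarrow> chi B \<notin> G"
proof
  define U where
    "U n = (\<Union>k. \<Union>F\<in>{F. finite F \<and> F \<subseteq> e k \<and> k + n \<le> card F}. {y. \<forall>j\<in>F. y j})" for n
  have "openin cantor_top (U n)" for n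
    unfolding U_def by (auto intro!: openin_Union openin_cantor_top_finite_true)
  then show "G_delta_in cantor_top (\<Inter>n. U n)"
    by (rule G_delta_inI)
  show "chi (e k) \<in> (\<Inter>n. U n)" for k
  proof
    fix n
    obtain F where F: "F \<subseteq> e k" "finite F" "card F = k + n"
      using infinite_arbitrarily_large[OF assms] by blast
    moreover have "chi (e k) \<in> {y. \<forall>j\<in>F. y j}"
      using F(1) by (auto simp: chi_def)
    ultimately show "chi (e k) \<in> U n"
      unfolding U_def by (intro UN_I[of k] UN_I[of F]) auto
  qed
  show "chi B \<notin> (\<Inter>n. U n)" if "bounded_traces e n B" for n B
  proof
    assume "chi B \<in> (\<Inter>n. U n)"
    then have "chi B \<in> U n"
      by blast
    then obtain k F where F: "finite F" "F \<subseteq> e k" "k + n \<le> card F" "\<forall>j\<in>F. chi B j"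
      unfolding U_def by blast
    then have "F \<subseteq> B \<inter> e k"
      by (auto simp: chi_def)
    have "finite (B \<inter> e k)" "card (B \<inter> e k) < k + n"
      using that unfolding bounded_traces_def by auto
    then show False
      using F \<open>F \<subseteq> B \<inter> e k\<close> card_mono[of "B \<inter> e k" F] by auto
  qed
qed

lemma cantor_top_open_superset_finite_has_gap:
  assumes "openin cantor_top U" and "chi ` {A. finite A} \<subseteq> U"
  obtains f where "\<And>A. has_gap f A \<Longrightarrow> chi A \<in> U"
proof -
  have "\<exists>N. \<forall>y. (\<forall>j<N. y j = chi x j) \<longrightarrow> y \<in> U" if "finite x" for x
    using openin_cantor_top_basic_nbhd[OF assms(1), of "chi x"] assms(2) that by blast
  then obtain N where N: "\<And>x y. finite x \<Longrightarrow> \<forall>j<N x. y j = chi x j \<Longrightarrow> y \<in> U"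
    by metis
  define f where "f p = Max (N ` Pow {..p})" for p
  have "chi A \<in> U" if gap: "has_gap f A" for A
  proof -
    obtain p where p: "p \<in> A" "\<And>m. p < m \<Longrightarrow> m < f p \<Longrightarrow> m \<notin> A"
      using gap unfolding has_gap_def by auto
    have "N (A \<inter> {..p}) \<le> f p"
      unfolding f_def by (intro Max_ge) auto
    then have "\<forall>j<N (A \<inter> {..p}). chi A j = chi (A \<inter> {..p}) j"
      using p(2) by (auto simp: chi_def) (metis leI less_le_trans)
    then show ?thesis
      using N[of "A \<inter> {..p}"] by simp
  qed
  then show ?thesis
    using that by blast
qed

locale omega1_order =
  fixes W :: "nat set rel"
  assumes Well_order_W: "Well_order W"
    and Field_W: "Field W = UNIV"
    and countable_underS: "countable (underS W Z)"
begin

lemma wf_W: "wf (W - Id)"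
  using Well_order_W by (simp add: well_order_on_def)

lemma W_refl: "(Z, Z) \<in> W"
  using Well_order_W Field_W by (simp add: order_on_defs refl_on_def)

lemma underS_mono: "(X, Z) \<in> W \<Longrightarrow> underS W X \<subseteq> underS W Z"
  using Well_order_W by (intro underS_incr) (simp_all add: order_on_defs)

lemma mem_W_if_notin_underS: "Z \<notin> underS W X \<Longrightarrow> (X, Z) \<in> W"
  using wo_rel.TOTALS[of W] Well_order_W Field_W W_refl
  by (auto simp: wo_rel_def underS_def)

lemma countable_under: "countable (under W Z)"
proof -
  have "under W Z \<subseteq> insert Z (underS W Z)"
    by (auto simp: under_def underS_def)
  moreover have "countable (insert Z (underS W Z))"
    using countable_underS by simp
  ultimately show ?thesis
    by (rule countable_subset)
qed

lemma countable_subset_underS: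
  assumes "countable I" obtains X where "I \<subseteq> underS W X"
proof -
  have "countable (\<Union>Z\<in>I. under W Z)"
    by (intro countable_UN assms countable_under)
  then obtain X where "X \<notin> (\<Union>Z\<in>I. under W Z)"
    using uncountable_UNIV_nat_set by (metis UNIV_eq_I)
  then have "I \<subseteq> underS W X"
    using mem_W_if_notin_underS unfolding under_def by blast
  then show ?thesis
    using that by blast
qed

definition family_before :: "(nat set \<Rightarrow> nat set) \<Rightarrow> nat set \<Rightarrow> nat set set" where
  "family_before h Z = range column \<union> h ` underS W Z"

definition enum_before :: "(nat set \<Rightarrow> nat set) \<Rightarrow> nat set \<Rightarrow> nat \<Rightarrow> nat set" where
  "enum_before h X = from_nat_into (family_before h X)"

definition ambient :: "(nat set \<Rightarrow> nat set) \<Rightarrow> nat set \<Rightarrow> nat set" where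
  "ambient h Z = (if infinite Z \<and> (\<forall>e\<in>family_before h Z. finite (Z \<inter> e)) then Z else UNIV)"

definition admissible :: "(nat set \<Rightarrow> nat set) \<Rightarrow> nat set \<Rightarrow> nat set \<Rightarrow> bool" where
  "admissible h Z A \<longleftrightarrow> infinite A \<and> A \<subseteq> ambient h Z \<and>
     (\<forall>X. (X, Z) \<in> W \<longrightarrow>
        (\<exists>n. bounded_traces (enum_before h X) n A) \<and> has_gap (fun_of_set X) A)"

lemma family_before_mono: "(X, Z) \<in> W \<Longrightarrow> family_before h X \<subseteq> family_before h Z"
  unfolding family_before_def using underS_mono[of X Z] by blast

lemma countable_family_before: "countable (family_before h X)"
  unfolding family_before_def by (intro countable_Un countable_image countableI_type countable_underS)

lemma range_enum_before: "range (enum_before h X) = family_before h X"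
  unfolding enum_before_def
  by (rule range_from_nat_into[OF _ countable_family_before]) (simp add: family_before_def)

lemma family_before_cong:
  "(\<And>Y. Y \<in> underS W Z \<Longrightarrow> f Y = g Y) \<Longrightarrow> family_before f Z = family_before g Z"
  unfolding family_before_def by (simp cong: image_cong)

lemma admissible_cong:
  assumes "\<And>Y. Y \<in> underS W Z \<Longrightarrow> f Y = g Y"
  shows "admissible f Z = admissible g Z"
proof -
  have "family_before f X = family_before g X" if "(X, Z) \<in> W" for X
    using assms underS_mono[OF that] by (intro family_before_cong) blast
  then have "enum_before f X = enum_before g X" if "(X, Z) \<in> W" for X
    using that by (simp add: enum_before_def)
  moreover have "ambient f Z = ambient g Z"
    using family_before_cong[OF assms] by (simp add: ambient_def)
  ultimately show ?thesis
    unfolding admissible_def by (intro ext) simp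
qed

lemma admissible_imp_almost_disjoint:
  assumes "admissible h Z A" and "e \<in> family_before h Z"
  shows "finite (A \<inter> e)"
proof -
  obtain k where "e = enum_before h Z k"
    using assms(2) range_enum_before by blast
  moreover obtain n where "bounded_traces (enum_before h Z) n A"
    using assms(1) W_refl unfolding admissible_def by blast
  ultimately show ?thesis
    unfolding bounded_traces_def by blast
qed

lemma infinite_ambient_Diff_Union:
  assumes IH: "\<And>Y. Y \<in> underS W Z \<Longrightarrow> admissible h Y (h Y)"
    and F: "finite F" "F \<subseteq> family_before h Z"
  shows "infinite (ambient h Z - \<Union>F)"
proof (cases "infinite Z \<and> (\<forall>e\<in>family_before h Z. finite (Z \<inter> e))")
  case True
  then have "infinite (Z - \<Union>F)"
    using F by (intro infinite_Diff_Union_almost_disjoint) auto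
  then show ?thesis
    using True by (simp add: ambient_def)
next
  case False
  have "\<not> range column \<subseteq> F"
    using infinite_range_column F(1) finite_subset by blast
  then obtain m where m: "column m \<notin> F"
    by blast
  have "finite (column m \<inter> e)" if "e \<in> F" for e
  proof -
    consider k where "e = column k" "k \<noteq> m" | Y where "Y \<in> underS W Z" "e = h Y"
      using F(2) \<open>e \<in> F\<close> m unfolding family_before_def by blast
    then show ?thesis
    proof cases
      case 1
      then show ?thesis
        using disjoint_column[of m k] by simp
    next
      case 2
      have "column m \<in> family_before h Y"
        unfolding family_before_def by blast
      then show ?thesis
        using admissible_imp_almost_disjoint[OF IH[OF 2(1)]] 2(2) by (simp add: Int_commute)
    qed
  qed
  then have "infinite (column m - \<Union>F)"
    using infinite_Diff_Union_almost_disjoint[OF infinite_column F(1)] by blast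
  moreover have "ambient h Z = UNIV"
    unfolding ambient_def using False by (rule if_not_P)
  then have "column m - \<Union>F \<subseteq> ambient h Z - \<Union>F"
    by blast
  ultimately show ?thesis
    using infinite_super by blast
qed

lemma exists_admissible:
  assumes IH: "\<And>Y. Y \<in> underS W Z \<Longrightarrow> admissible h Y (h Y)"
  shows "\<exists>A. admissible h Z A"
proof -
  define X where "X = from_nat_into (under W Z)"
  have "under W Z \<noteq> {}"
    using W_refl by (auto simp: under_def)
  then have "X j \<in> under W Z" for j
    unfolding X_def by (rule from_nat_into)
  then have X_le: "(X j, Z) \<in> W" for j
    by (simp add: under_def)
  have X_onto: "\<exists>j. X j = X'" if "(X', Z) \<in> W" for X'
    unfolding X_def using that by (intro from_nat_into_surj countable_under) (simp add: under_def)
  define D where "D j = enum_before h (X j)" for j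
  have D_before: "D j k \<in> family_before h Z" for j k
    using range_enum_before family_before_mono[OF X_le] unfolding D_def by blast
  have "infinite (ambient h Z - (\<Union>j\<le>i. \<Union>k\<le>i. D j k))" for i
  proof -
    let ?F = "(\<lambda>(j, k). D j k) ` ({..i} \<times> {..i})"
    have "infinite (ambient h Z - \<Union>?F)"
      using D_before by (intro infinite_ambient_Diff_Union[OF IH]) auto
    moreover have "\<Union>?F = (\<Union>j\<le>i. \<Union>k\<le>i. D j k)"
      by auto
    ultimately show ?thesis
      by simp
  qed
  then obtain A where A: "infinite A" "A \<subseteq> ambient h Z"
    "\<And>j. bounded_traces (D j) (Suc j) A" "\<And>j. has_gap (fun_of_set (X j)) A"
    by (rule exists_bounded_traces_has_gap[where g = "\<lambda>j. fun_of_set (X j)"]) blast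
  have "(\<exists>n. bounded_traces (enum_before h X') n A) \<and> has_gap (fun_of_set X') A"
    if "(X', Z) \<in> W" for X'
    using X_onto[OF that] A(3,4) unfolding D_def by blast
  then have "admissible h Z A"
    using A(1,2) by (simp add: admissible_def)
  then show ?thesis ..
qed

definition mad_seq :: "nat set \<Rightarrow> nat set" where
  "mad_seq = wfrec (W - Id) (\<lambda>h Z. SOME A. admissible h Z A)"

definition mad_family :: "nat set set" where
  "mad_family = range column \<union> range mad_seq"

lemma admissible_mad_seq: "admissible mad_seq Z (mad_seq Z)"
  unfolding mad_seq_def
proof (rule wfrec_SOME_invariant[OF wf_W])
  show "admissible f Z = admissible g Z" if "\<And>Y. (Y, Z) \<in> W - Id \<Longrightarrow> f Y = g Y" for f g Z
    using that by (intro admissible_cong) (simp add: underS_def)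
  show "\<exists>A. admissible f Z A" if "\<And>Y. (Y, Z) \<in> W - Id \<Longrightarrow> admissible f Y (f Y)" for f Z
    using that by (intro exists_admissible) (simp add: underS_def)
qed

lemma mad_family_cases:
  assumes "A \<in> mad_family"
  obtains "A \<in> family_before mad_seq X" | Z where "(X, Z) \<in> W" "A = mad_seq Z"
proof -
  consider k where "A = column k" | Z where "A = mad_seq Z"
    using assms unfolding mad_family_def by blast
  then show ?thesis
  proof cases
    case (2 Z)
    then show ?thesis
      using that mem_W_if_notin_underS[of Z X] unfolding family_before_def by blast
  qed (use that in \<open>simp add: family_before_def\<close>)
qed

lemma family_before_subset_mad_family: "family_before mad_seq X \<subseteq> mad_family"
  unfolding family_before_def mad_family_def by blast

lemma infinite_mem_mad_family: "A \<in> mad_family \<Longrightarrow> infinite A"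
  using admissible_mad_seq infinite_column unfolding mad_family_def admissible_def by blast

lemma almost_disjoint_mad_seq:
  assumes "B \<in> mad_family" and "B \<noteq> mad_seq Z"
  shows "finite (mad_seq Z \<inter> B)"
  using assms(1)
proof (cases rule: mad_family_cases[where X = Z])
  case 1
  then show ?thesis
    by (rule admissible_imp_almost_disjoint[OF admissible_mad_seq])
next
  case (2 Z')
  then have "mad_seq Z \<in> family_before mad_seq Z'"
    using assms(2) unfolding family_before_def underS_def by blast
  then have "finite (mad_seq Z' \<inter> mad_seq Z)"
    by (rule admissible_imp_almost_disjoint[OF admissible_mad_seq])
  then show ?thesis
    using 2(2) by (simp add: Int_commute)
qed

lemma MAD_mad_family: "MAD mad_family"
  unfolding MAD_def
proof (intro conjI ballI allI impI)
  show "infinite mad_family"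
    using infinite_range_column infinite_super unfolding mad_family_def by blast
  show "infinite A" if "A \<in> mad_family" for A
    using that by (rule infinite_mem_mad_family)
  show "finite (A \<inter> B)" if A: "A \<in> mad_family" and B: "B \<in> mad_family" and "A \<noteq> B" for A B
  proof -
    consider j k where "A = column j" "B = column k" | Z where "A = mad_seq Z"
      | Z where "B = mad_seq Z"
      using A B unfolding mad_family_def by blast
    then show ?thesis
    proof cases
      case 1
      then have "j \<noteq> k"
        using \<open>A \<noteq> B\<close> by blast
      then show ?thesis
        using 1 disjoint_column[of j k] by simp
    next
      case (2 Z)
      then show ?thesis
        using almost_disjoint_mad_seq[OF B] \<open>A \<noteq> B\<close> by simp
    next
      case (3 Z)
      then show ?thesis
        using almost_disjoint_mad_seq[OF A] \<open>A \<noteq> B\<close> by (simp add: Int_commute)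
    qed
  qed
  show "\<exists>A\<in>mad_family. infinite (X \<inter> A)" if "infinite X" for X
  proof (cases "\<exists>e\<in>family_before mad_seq X. infinite (X \<inter> e)")
    case True
    then show ?thesis
      using family_before_subset_mad_family by blast
  next
    case False
    then have "mad_seq X \<subseteq> X"
      using admissible_mad_seq[of X] \<open>infinite X\<close> by (simp add: admissible_def ambient_def)
    then have "X \<inter> mad_seq X = mad_seq X"
      by blast
    moreover have "mad_seq X \<in> mad_family"
      by (simp add: mad_family_def)
    ultimately show ?thesis
      using infinite_mem_mad_family by (intro bexI[of _ "mad_seq X"]) simp_all
  qed
qed

lemma concentrated_on_fin_mad_family: "concentrated_on_fin mad_family"
  unfolding concentrated_on_fin_def
proof (intro allI impI)
  fix U assume "openin cantor_top U \<and> chi ` {A. finite A} \<subseteq> U"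
  then obtain f where f: "\<And>A. has_gap f A \<Longrightarrow> chi A \<in> U"
    using cantor_top_open_superset_finite_has_gap by blast
  obtain S where S: "fun_of_set S = f"
    using fun_of_set_surj by blast
  have "A \<in> family_before mad_seq S" if "A \<in> mad_family" "chi A \<notin> U" for A
    using that(1)
  proof (cases rule: mad_family_cases[where X = S])
    case (2 Z)
    then have "has_gap f A"
      using admissible_mad_seq[of Z] S unfolding admissible_def by blast
    then show ?thesis
      using f that(2) by blast
  qed
  then have "{A \<in> mad_family. chi A \<notin> U} \<subseteq> family_before mad_seq S"
    by blast
  then show "countable {A \<in> mad_family. chi A \<notin> U}"
    using countable_family_before by (rule countable_subset)
qed

lemma countable_subset_family_before:
  assumes "countable C" and "C \<subseteq> mad_family"
  obtains X where "C \<subseteq> family_before mad_seq X"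
proof -
  obtain X where X: "inv mad_seq ` C \<subseteq> underS W X"
    using countable_subset_underS assms(1) by (metis countable_image)
  have "c \<in> family_before mad_seq X" if "c \<in> C" for c
  proof (cases "c \<in> range mad_seq")
    case True
    then have "c = mad_seq (inv mad_seq c)"
      by (simp add: f_inv_into_f)
    then show ?thesis
      using X that unfolding family_before_def by blast
  next
    case False
    then show ?thesis
      using assms(2) that unfolding mad_family_def family_before_def by blast
  qed
  then show ?thesis
    using that by blast
qed

lemma lambda_set_mad_family: "lambda_set mad_family"
  unfolding lambda_set_def
proof (intro allI impI)
  fix C assume C: "C \<subseteq> mad_family \<and> countable C"
  then obtain X where X: "C \<subseteq> family_before mad_seq X"
    using countable_subset_family_before by blast
  let ?E = "family_before mad_seq X"
  have "infinite (enum_before mad_seq X k)" for k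
    using range_enum_before family_before_subset_mad_family infinite_mem_mad_family by blast
  then obtain G where G: "G_delta_in cantor_top G" "\<And>k. chi (enum_before mad_seq X k) \<in> G"
    "\<And>n B. bounded_traces (enum_before mad_seq X) n B \<Longrightarrow> chi B \<notin> G"
    by (rule G_delta_in_cantor_top_bounded_traces[of "enum_before mad_seq X"]) blast
  have earlier_in_G: "chi e \<in> G" if "e \<in> ?E" for e
    using that G(2) range_enum_before by (metis imageE)
  have later_notin_G: "chi (mad_seq Z) \<notin> G" if "(X, Z) \<in> W" for Z
    using that G(3) admissible_mad_seq[of Z] unfolding admissible_def by blast
  let ?G = "G \<inter> - chi ` (?E - C)"
  have "countable (chi ` (?E - C))"
    using countable_family_before by simp
  then have "G_delta_in cantor_top ?G"
    using G(1) by (intro G_delta_in_Int G_delta_in_cantor_top_Compl_countable)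
  moreover have "chi ` C = ?G \<inter> chi ` mad_family"
  proof
    show "chi ` C \<subseteq> ?G \<inter> chi ` mad_family"
      using C X earlier_in_G inj_chi by (auto dest: injD)
    show "?G \<inter> chi ` mad_family \<subseteq> chi ` C"
    proof
      fix y assume y: "y \<in> ?G \<inter> chi ` mad_family"
      then obtain A where A: "A \<in> mad_family" "y = chi A"
        by blast
      then have "A \<in> ?E"
        using y later_notin_G by (cases rule: mad_family_cases[where X = X]) auto
      then show "y \<in> chi ` C"
        using y A by blast
    qed
  qed
  ultimately show "\<exists>G. G_delta_in cantor_top G \<and> chi ` C = G \<inter> chi ` mad_family"
    by blast
qed

end

theorem theorem4:
  assumes "CH"
  shows "\<exists>\<A> :: nat set set. MAD \<A> \<and> lambda_set \<A> \<and> concentrated_on_fin \<A>"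
proof -
  interpret omega1_order "card_of (UNIV :: nat set set)"
  proof
    show "Well_order (card_of (UNIV :: nat set set))"
      by (rule card_of_Well_order)
    show "Field (card_of (UNIV :: nat set set)) = UNIV"
      by (rule Field_card_of)
    show "countable (underS (card_of (UNIV :: nat set set)) Z)" for Z
      using assms unfolding CH_def
      by (intro countable_underS_if_ordIso_cardSuc_natLeq card_of_Card_order) simp
  qed
  show ?thesis
    using MAD_mad_family lambda_set_mad_family concentrated_on_fin_mad_family by blast
qed

end
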